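(* Let $\alpha\colon\mathbb{R}\to\mathbb{R}$ be continuous and suppose $S_\alpha$ is a graphical strip over $K$. Then $\frac{\alpha(w_2)-\alpha(w_1)}{w_2-w_1}\ge-1$ for all $w_1<w_2$ if and only if there is a function $\sigma\colon\mathbb{R}\to\mathbb{R}$ such that $-2\le\frac{\sigma(z_2)-\sigma(z_1)}{z_2-z_1}<2$ for all $z_1<z_2$ and $$S_\alpha=\bigcup_{z\in\mathbb{R}}[(-1,-\sigma(z),z),(1,\sigma(z),z)].$$
   Context: $\mathbb{H}$ is $\mathbb{R}^3$ with product $(x,y,z)\cdot(x',y',z')=(x+x',y+y',z+z'+\frac{xy'-yx'}{2})$; $Y^t=(0,t,0)$. A horizontal line is a set $\{p\cdot tv:t\in\mathbb{R}\}$, $v=(a,b,0)\neq0$; a ruled surface is a union of horizontal segments (rulings) with endpoints in its boundary. $V_0=\{(x,0,z)\}$; for $D\subset V_0$, $f\colon D\to\mathbb{R}$, $\Gamma_f=\{u\cdot Y^{f(u)}\}$. A graphical strip over $D$ is an intrinsic graph of a continuous function on $D$ which is ruled and all of whose rulings meet the $z$-axis. $K=\{(x,0,z):|x|\le1\}$. For continuous $\alpha$: $\eta(w)=w+\frac{\alpha(w)}2$ and $S_\alpha=\bigcup_w[(-1,-\alpha(w),\eta(w)),(1,\alpha(w),\eta(w))]$, $[p_1,p_2]$ the line segment. *)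

theory Defs
  imports "HOL-Analysis.Analysis"
begin

type_synonym heis = "real \<times> real \<times> real"

definition hmul :: "heis \<Rightarrow> heis \<Rightarrow> heis" (infixl "\<cdot>\<^sub>H" 70) where
  "hmul p q = (case p of (x, y, z) \<Rightarrow> case q of (x', y', z') \<Rightarrow>
      (x + x', y + y', z + z' + (x * y' - y * x') / 2))"

definition Yflow :: "real \<Rightarrow> heis" where
  "Yflow t = (0, t, 0)"

definition horizontal_vec :: "heis \<Rightarrow> bool" where
  "horizontal_vec v \<longleftrightarrow> snd (snd v) = 0 \<and> v \<noteq> 0"

definition hseg :: "heis \<Rightarrow> heis \<Rightarrow> real \<Rightarrow> real \<Rightarrow> heis set" where
  "hseg p v s t = {p \<cdot>\<^sub>H (r *\<^sub>R v) | r. s \<le> r \<and> r \<le> t}"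

definition V0 :: "heis set" where
  "V0 = {(x, y, z). y = 0}"

definition intrinsic_graph :: "heis set \<Rightarrow> (heis \<Rightarrow> real) \<Rightarrow> heis set" where
  "intrinsic_graph D f = {u \<cdot>\<^sub>H Yflow (f u) | u. u \<in> D}"

definition ruled_by :: "heis set \<Rightarrow> heis set \<Rightarrow> (heis \<times> heis \<times> real \<times> real) set \<Rightarrow> bool" where
  "ruled_by S B R \<longleftrightarrow>
     (\<forall>(p, v, s, t) \<in> R. horizontal_vec v \<and> s < t \<and>
         p \<cdot>\<^sub>H (s *\<^sub>R v) \<in> B \<and> p \<cdot>\<^sub>H (t *\<^sub>R v) \<in> B) \<and>
     S = (\<Union>(p, v, s, t) \<in> R. hseg p v s t)"

definition z_axis :: "heis set" where
  "z_axis = {(0, 0, z) | z. True}"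

text \<open>Graphical strip over \<open>D \<subseteq> V0\<close>: intrinsic graph of a continuous \<open>f\<close> on \<open>D\<close>
  which is ruled (endpoints of rulings in the boundary of the graph, i.e. the graph
  over the relative frontier of \<open>D\<close> in \<open>V0\<close>), all rulings meeting the \<open>z\<close>-axis.\<close>
definition graphical_strip :: "heis set \<Rightarrow> heis set \<Rightarrow> bool" where
  "graphical_strip D S \<longleftrightarrow> D \<subseteq> V0 \<and>
     (\<exists>f. continuous_on D f \<and> S = intrinsic_graph D f \<and>
        (\<exists>R. ruled_by S (intrinsic_graph (D \<inter> (subtopology euclidean V0 frontier_of D)) f) R \<and>
             (\<forall>(p, v, s, t) \<in> R. hseg p v s t \<inter> z_axis \<noteq> {})))"

definition Kset :: "heis set" where
  "Kset = {(x, 0, z) | x z. \<bar>x\<bar> \<le> 1}"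

definition S_alpha :: "(real \<Rightarrow> real) \<Rightarrow> heis set" where
  "S_alpha \<alpha> = (\<Union>w. closed_segment (-1, - \<alpha> w, w + \<alpha> w / 2) (1, \<alpha> w, w + \<alpha> w / 2))"

end

theory Submission
  imports Defs
begin

text \<open>The ruling of \<open>S_alpha \<alpha>\<close> with parameter \<open>w\<close> lies at height \<open>\<eta> w = w + \<alpha> w / 2\<close>.
  If \<open>\<sigma> z\<close> is the slope of the ruling at height \<open>z\<close>, then \<open>\<sigma> \<circ> \<eta> = \<alpha>\<close>, so
  \<open>\<zeta> z = z - \<sigma> z / 2\<close> is a left inverse of \<open>\<eta>\<close>. The slope bound \<open>\<ge> -1\<close> for \<open>\<alpha>\<close> says
  that \<open>\<eta>\<close> expands distances by a factor of at least \<open>1/2\<close>, and the slope bounds \<open>[-2, 2)\<close>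
  for \<open>\<sigma>\<close> say that \<open>\<zeta>\<close> is strictly increasing and \<open>2\<close>-Lipschitz; these two properties
  pass between a map and its inverse. Continuity of \<open>\<alpha>\<close> makes \<open>\<eta>\<close> onto, so that every
  height carries a ruling and \<open>\<sigma>\<close> is defined everywhere.\<close>

definition expanding :: "real \<Rightarrow> (real \<Rightarrow> real) \<Rightarrow> bool" where
  "expanding c f \<longleftrightarrow> (\<forall>x y. x < y \<longrightarrow> c * (y - x) \<le> f y - f x)"

lemma expanding_imp_strict_mono:
  assumes "expanding c f" "c > 0"
  shows "strict_mono f"
proof (rule strict_monoI)
  fix x y :: real
  assume "x < y"
  then have "0 < c * (y - x)" using \<open>c > 0\<close> by simp
  also have "\<dots> \<le> f y - f x" using assms(1) \<open>x < y\<close> unfolding expanding_def by blast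
  finally show "f x < f y" by simp
qed

lemma continuous_expanding_imp_bij:
  assumes "continuous_on UNIV f" "expanding c f" "c > 0"
  shows "bij f"
proof (rule bijI)
  show "inj f"
    using expanding_imp_strict_mono[OF assms(2,3)] by (rule strict_mono_imp_inj_on)
  have "y \<in> range f" for y
  proof -
    define r where "r = \<bar>y - f 0\<bar> / c + 1"
    have "r > 0" using \<open>c > 0\<close> by (simp add: r_def add_nonneg_pos)
    have "\<bar>y - f 0\<bar> \<le> c * r" using \<open>c > 0\<close> by (simp add: r_def algebra_simps)
    moreover have "c * (r - 0) \<le> f r - f 0"
      using assms(2) \<open>r > 0\<close> unfolding expanding_def by blast
    moreover have "c * (0 - (- r)) \<le> f 0 - f (- r)"
      using assms(2) \<open>r > 0\<close> neg_less_0_iff_less unfolding expanding_def by blast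
    ultimately have "f (- r) \<le> y" "y \<le> f r" by (auto simp: abs_le_iff)
    then obtain x where "f x = y"
      using IVT'[of f "- r" y r] \<open>r > 0\<close> continuous_on_subset[OF assms(1)] by auto
    then show ?thesis by blast
  qed
  then show "surj f" by blast
qed

lemma expanding_right_inverse:
  assumes "expanding c f" "c > 0" "\<And>y. f (g y) = y" "y1 < y2"
  shows "g y1 < g y2 \<and> c * (g y2 - g y1) \<le> y2 - y1"
proof -
  have "g y1 < g y2"
  proof (rule ccontr)
    assume "\<not> g y1 < g y2"
    then have "f (g y2) \<le> f (g y1)"
      using expanding_imp_strict_mono[OF assms(1,2)] by (simp add: strict_mono_less_eq)
    then show False using assms(3,4) by simp
  qed
  moreover have "c * (g y2 - g y1) \<le> f (g y2) - f (g y1)"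
    using assms(1) \<open>g y1 < g y2\<close> unfolding expanding_def by blast
  ultimately show ?thesis using assms(3) by simp
qed

lemma expanding_if_left_inverse:
  assumes "\<And>x. g (f x) = x"
    and "\<And>y1 y2. y1 < y2 \<Longrightarrow> g y1 < g y2 \<and> c * (g y2 - g y1) \<le> y2 - y1"
  shows "expanding c f"
  unfolding expanding_def
proof (intro allI impI)
  fix x1 x2 :: real
  assume "x1 < x2"
  have "f x1 < f x2"
  proof (rule ccontr)
    assume "\<not> f x1 < f x2"
    then have "g (f x2) \<le> g (f x1)"
      using assms(2)[of "f x2" "f x1"] by (cases "f x2 = f x1") auto
    then show False using assms(1) \<open>x1 < x2\<close> by simp
  qed
  from assms(2)[OF this] show "c * (x2 - x1) \<le> f x2 - f x1"
    using assms(1) by simp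
qed

lemma segment_through_z_axis_coordinates:
  fixes s z :: real
  assumes "p \<in> closed_segment (-1, - s, z) (1, s, z)"
  shows "snd (snd p) = z \<and> fst (snd p) = fst p * s"
proof -
  from assms obtain u :: real where "p = (1 - u) *\<^sub>R ((-1::real), - s, z) + u *\<^sub>R (1, s, z)"
    unfolding closed_segment_def by blast
  then show ?thesis by (simp add: algebra_simps)
qed

lemma S_alpha_eq_reparametrisation:
  assumes "surj (\<lambda>w. w + \<alpha> w / 2)" "\<And>w. \<sigma> (w + \<alpha> w / 2) = \<alpha> w"
  shows "S_alpha \<alpha> = (\<Union>z. closed_segment (-1, - \<sigma> z, z) (1, \<sigma> z, z))"
proof -
  let ?seg = "\<lambda>z. closed_segment (-1, - \<sigma> z, z) (1, \<sigma> z, z)"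
  have "S_alpha \<alpha> = \<Union> (?seg ` range (\<lambda>w. w + \<alpha> w / 2))"
    unfolding S_alpha_def by (simp add: image_image assms(2))
  then show ?thesis using assms(1) by simp
qed

lemma S_alpha_reparametrisation_slope_at_height:
  assumes "S_alpha \<alpha> = (\<Union>z. closed_segment (-1, - \<sigma> z, z) (1, \<sigma> z, z))"
  shows "\<sigma> (w + \<alpha> w / 2) = \<alpha> w"
proof -
  have "(1, \<alpha> w, w + \<alpha> w / 2) \<in> S_alpha \<alpha>"
    unfolding S_alpha_def by blast
  then obtain z where "((1::real), \<alpha> w, w + \<alpha> w / 2) \<in> closed_segment (-1, - \<sigma> z, z) (1, \<sigma> z, z)"
    unfolding assms by blast
  from segment_through_z_axis_coordinates[OF this] have "w + \<alpha> w / 2 = z" "\<alpha> w = \<sigma> z"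
    by simp_all
  then show ?thesis by simp
qed

lemma S_alpha_reparametrisation_if_slope_ge:
  fixes \<alpha> :: "real \<Rightarrow> real"
  assumes "continuous_on UNIV \<alpha>"
    and slope_\<alpha>: "\<And>w1 w2. w1 < w2 \<Longrightarrow> -1 \<le> (\<alpha> w2 - \<alpha> w1) / (w2 - w1)"
  shows "\<exists>\<sigma>. (\<forall>z1 z2. z1 < z2 \<longrightarrow>
      -2 \<le> (\<sigma> z2 - \<sigma> z1) / (z2 - z1) \<and> (\<sigma> z2 - \<sigma> z1) / (z2 - z1) < 2) \<and>
    S_alpha \<alpha> = (\<Union>z. closed_segment (-1, - \<sigma> z, z) (1, \<sigma> z, z))"
proof -
  define \<eta> where "\<eta> w = w + \<alpha> w / 2" for w
  have "expanding (1/2) \<eta>"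
    unfolding expanding_def
  proof (intro allI impI)
    fix x y :: real
    assume "x < y"
    with slope_\<alpha> have "-1 * (y - x) \<le> \<alpha> y - \<alpha> x" by (simp add: pos_le_divide_eq)
    then show "1/2 * (y - x) \<le> \<eta> y - \<eta> x" by (simp add: \<eta>_def)
  qed
  moreover have "continuous_on UNIV \<eta>"
    unfolding \<eta>_def by (intro continuous_intros assms(1)) auto
  ultimately have "bij \<eta>" by (intro continuous_expanding_imp_bij) auto
  have \<eta>_inv: "\<eta> (inv \<eta> z) = z" for z
    using \<open>bij \<eta>\<close> by (simp add: bij_is_surj surj_f_inv_f)
  define \<sigma> where "\<sigma> z = 2 * (z - inv \<eta> z)" for z
  have "-2 \<le> (\<sigma> z2 - \<sigma> z1) / (z2 - z1) \<and> (\<sigma> z2 - \<sigma> z1) / (z2 - z1) < 2" if "z1 < z2" for z1 z2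
    using expanding_right_inverse[OF \<open>expanding (1/2) \<eta>\<close> _ \<eta>_inv that] that
    by (simp add: \<sigma>_def pos_le_divide_eq pos_divide_less_eq)
  moreover have "S_alpha \<alpha> = (\<Union>z. closed_segment (-1, - \<sigma> z, z) (1, \<sigma> z, z))"
  proof (rule S_alpha_eq_reparametrisation)
    show "surj (\<lambda>w. w + \<alpha> w / 2)"
      using bij_is_surj[OF \<open>bij \<eta>\<close>] unfolding \<eta>_def .
    show "\<sigma> (w + \<alpha> w / 2) = \<alpha> w" for w
      using inv_f_f[OF bij_is_inj[OF \<open>bij \<eta>\<close>], of w] by (simp add: \<sigma>_def \<eta>_def)
  qed
  ultimately show ?thesis by blast
qed

lemma slope_ge_if_S_alpha_reparametrisation:
  fixes \<alpha> \<sigma> :: "real \<Rightarrow> real"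
  assumes slope_\<sigma>: "\<And>z1 z2. z1 < z2 \<Longrightarrow>
      -2 \<le> (\<sigma> z2 - \<sigma> z1) / (z2 - z1) \<and> (\<sigma> z2 - \<sigma> z1) / (z2 - z1) < 2"
    and "S_alpha \<alpha> = (\<Union>z. closed_segment (-1, - \<sigma> z, z) (1, \<sigma> z, z))"
    and "w1 < w2"
  shows "-1 \<le> (\<alpha> w2 - \<alpha> w1) / (w2 - w1)"
proof -
  define \<eta> where "\<eta> w = w + \<alpha> w / 2" for w
  define \<zeta> where "\<zeta> z = z - \<sigma> z / 2" for z
  have "\<zeta> (\<eta> w) = w" for w
    using S_alpha_reparametrisation_slope_at_height[OF assms(2)] by (simp add: \<eta>_def \<zeta>_def)
  moreover have "\<zeta> z1 < \<zeta> z2 \<and> 1/2 * (\<zeta> z2 - \<zeta> z1) \<le> z2 - z1" if "z1 < z2" for z1 z2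
    using slope_\<sigma>[OF that] that by (simp add: \<zeta>_def pos_le_divide_eq pos_divide_less_eq)
  ultimately have "expanding (1/2) \<eta>" by (rule expanding_if_left_inverse)
  with \<open>w1 < w2\<close> have "1/2 * (w2 - w1) \<le> \<eta> w2 - \<eta> w1"
    unfolding expanding_def by blast
  with \<open>w1 < w2\<close> show ?thesis
    by (simp add: \<eta>_def pos_le_divide_eq)
qed

theorem lemma3p4:
  fixes \<alpha> :: "real \<Rightarrow> real"
  assumes "continuous_on UNIV \<alpha>"
    and "graphical_strip Kset (S_alpha \<alpha>)"
  shows "(\<forall>w1 w2. w1 < w2 \<longrightarrow> (\<alpha> w2 - \<alpha> w1) / (w2 - w1) \<ge> -1) \<longleftrightarrow>
    (\<exists>\<sigma> :: real \<Rightarrow> real.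
       (\<forall>z1 z2. z1 < z2 \<longrightarrow> -2 \<le> (\<sigma> z2 - \<sigma> z1) / (z2 - z1) \<and> (\<sigma> z2 - \<sigma> z1) / (z2 - z1) < 2) \<and>
       S_alpha \<alpha> = (\<Union>z. closed_segment (-1, - \<sigma> z, z) (1, \<sigma> z, z)))"
  using S_alpha_reparametrisation_if_slope_ge[OF assms(1)] slope_ge_if_S_alpha_reparametrisation
  by blast

end
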